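(* Let $m$ be a positive integer and let $h_c, h_r$ be independent random variables such that each of $|h_c|^2$ and $|h_r|^2$ has density $f(x)=\frac{m^m}{\Gamma(m)}x^{m-1}e^{-mx}$, $x>0$. Let $P_c,P_r,P_{BS},C_c,C_r,d_c,d_r,\alpha_c,\alpha_r,\beta_{semi},B,\sigma_\tau^2,\sigma^2,\gamma_{th},\gamma_{SIC}$ be positive constants and $\gamma^2=(2\pi)^2/12$. Put $\bar I = P_{BS}C_r d_r^{-\alpha_r}\gamma^2\beta_{semi}^2B^2\sigma_\tau^2$, $$\gamma_c^I=\frac{P_c C_c d_c^{-\alpha_c}|h_c|^2}{P_r C_c d_r^{-\alpha_c}|h_r|^2+\bar I+\sigma^2},\qquad \gamma_r^I=\frac{P_r C_c d_r^{-\alpha_c}|h_r|^2}{\bar I+\sigma^2}.$$ Define $a_1=\frac{\bar I}{C_c d_c^{-\alpha_c}}$, $a_2=\frac{\sigma^2}{C_c d_c^{-\alpha_c}}$, $a_3=\frac{d_r^{-\alpha_c}}{d_c^{-\alpha_c}}$, $a_4=\frac{\bar I}{C_c d_r^{-\alpha_c}}$, $a_5=\frac{\sigma^2}{C_c d_r^{-\alpha_c}}$. Then $\mathbb{P}_r^I:=1-\Pr\{\gamma_c^I>\gamma_{SIC},\ \gamma_r^I>\gamma_{th}\}$ equals $$1-\sum_{p=0}^{m-1}\sum_{r=0}^{p}\binom{p}{r}\frac{(a_1+a_2)^{p-r}(a_3P_r)^r}{\Gamma(m)\,m^r\,p!}\Big(\frac{m\gamma_{SIC}}{P_c}\Big)^p\exp\!\Big(-\frac{m\gamma_{SIC}(a_1+a_2)}{P_c}\Big)\Big(\frac{\gamma_{SIC}a_3P_r}{P_c}+1\Big)^{-(r+m)}\Gamma\!\Big(r+m,\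 \frac{\gamma_{th}m(a_4+a_5)}{P_r}\Big(\frac{\gamma_{SIC}a_3P_r}{P_c}+1\Big)\Big).$$
   Context: Setting: uplink NOMA-assisted semi-integrated sensing and communication with a near communication transmitter (distance $d_c$, power $P_c$) and a far radar target (distance $d_r$, uplink power $P_r$); communication path loss $C_c d^{-\alpha_c}$; Nakagami-$m$ unit-mean independent small-scale power gains $|h_c|^2,|h_r|^2$; radar echo interference (BS power $P_{BS}$, echo path loss $C_r d_r^{-\alpha_r}$, sensing bandwidth fraction $\beta_{semi}$ of bandwidth $B$, time-delay variance $\sigma_\tau^2$) replaced by its mean $\bar I$. The BS first decodes the transmitter's signal (success iff $\gamma_c^I>\gamma_{SIC}$, the SIC threshold), removes it, then decodes the target's communication signal with SINR $\gamma_r^I$ and threshold $\gamma_{th}$; $\mathbb{P}_r^I$ is the target's outage probability. $\Gamma(\cdot,\cdot)$ is the upper incomplete Gamma function, $\Gamma(\cdot)$ the Gamma function, $\binom{p}{r}=p!/(r!(p-r)!)$. *)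

theory Defs
  imports "HOL-Probability.Probability"
begin

definition upper_Gamma :: "real \<Rightarrow> real \<Rightarrow> real" where
  "upper_Gamma s x = (LBINT t:{x<..}. t powr (s - 1) * exp (- t))"

definition nakagami_pow_density :: "nat \<Rightarrow> real \<Rightarrow> real" where
  "nakagami_pow_density m x =
     (if x > 0 then real m ^ m / Gamma (real m) * x ^ (m - 1) * exp (- real m * x) else 0)"

end

theory Submission
  imports Defs
begin

text \<open>
  With unit-mean Nakagami-m fading the power gains are Erlang distributed with shape m and rate m.
  After clearing denominators the two decoding conditions read
  X > t (b Y + A) and Y > \<theta>, so conditioning on Y = y the first one has the Erlang survival
  probability, a truncated Poisson sum in t (b y + A). Expanding (b y + A)^p binomially and
  integrating against the density of Y over (\<theta>, \<infinity>) leaves integrals of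
  y^(m - 1 + r) e^(-m (t b + 1) y), which are upper incomplete Gamma functions after rescaling.
\<close>

lemma upper_Gamma_nonneg: "0 \<le> upper_Gamma s a"
  unfolding upper_Gamma_def set_lebesgue_integral_def
  by (auto intro!: integral_nonneg_AE)

lemma nn_integral_power_exp_greaterThan:
  fixes a :: real
  assumes "0 \<le> a"
  shows "(\<integral>\<^sup>+x. ennreal (x ^ n * exp (- x)) * indicator {a<..} x \<partial>lborel)
       = ennreal (upper_Gamma (real (Suc n)) a)"
proof -
  let ?N = "\<integral>\<^sup>+x. ennreal (x ^ n * exp (- x)) * indicator {a<..} x \<partial>lborel"
  have "?N \<le> (\<integral>\<^sup>+x. ennreal (x ^ n * exp (- x)) * indicator {0..} x \<partial>lborel)"
    using assms by (intro nn_integral_mono) (auto split: split_indicator)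
  also have "\<dots> = real_of_nat (fact n)"
    by (rule nn_intergal_power_times_exp_Ici)
  finally have finite: "?N < \<infinity>"
    by (auto simp: less_top[symmetric] top_unique)
  have "upper_Gamma (real (Suc n)) a
      = enn2real (\<integral>\<^sup>+t. ennreal (indicator {a<..} t *\<^sub>R (t powr (real (Suc n) - 1) * exp (- t))) \<partial>lborel)"
    unfolding upper_Gamma_def set_lebesgue_integral_def
    by (rule integral_eq_nn_integral) auto
  also have "\<dots> = enn2real ?N"
    using assms by (intro arg_cong[where f = enn2real] nn_integral_cong)
      (auto split: split_indicator simp: powr_realpow)
  finally show ?thesis
    using finite by simp
qed

lemma nn_integral_power_exp_scaled_greaterThan:
  fixes \<kappa> a :: real
  assumes "0 < \<kappa>" "0 \<le> a"
  shows "(\<integral>\<^sup>+y. ennreal (y ^ n * exp (- \<kappa> * y)) * indicator {a<..} y \<partial>lborel)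
       = ennreal (\<kappa> powr (- real (Suc n)) * upper_Gamma (real (Suc n)) (\<kappa> * a))"
proof -
  have substituted: "(\<integral>\<^sup>+x. ennreal ((x / \<kappa>) ^ n * exp (- x)) * indicator {a<..} (x / \<kappa>) \<partial>lborel)
      = (\<integral>\<^sup>+x. ennreal (1 / \<kappa> ^ n) * (ennreal (x ^ n * exp (- x)) * indicator {\<kappa> * a<..} x) \<partial>lborel)"
    using assms by (intro nn_integral_cong)
      (auto split: split_indicator simp: ennreal_mult'[symmetric] power_divide field_simps)
  have "(\<integral>\<^sup>+y. ennreal (y ^ n * exp (- \<kappa> * y)) * indicator {a<..} y \<partial>lborel)
      = ennreal (1 / \<kappa>) * (\<integral>\<^sup>+x. ennreal (1 / \<kappa> ^ n) * (ennreal (x ^ n * exp (- x)) * indicator {\<kappa> * a<..} x) \<partial>lborel)"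
    using assms by (subst nn_integral_real_affine[where c = "1 / \<kappa>" and t = 0]) (auto simp: substituted)
  also have "\<dots> = ennreal (1 / \<kappa>) * (ennreal (1 / \<kappa> ^ n) * ennreal (upper_Gamma (real (Suc n)) (\<kappa> * a)))"
    using assms by (simp add: nn_integral_cmult nn_integral_power_exp_greaterThan)
  also have "\<dots> = ennreal (1 / \<kappa> ^ Suc n * upper_Gamma (real (Suc n)) (\<kappa> * a))"
    using assms upper_Gamma_nonneg by (simp add: ennreal_mult'[symmetric] mult.assoc)
  also have "1 / \<kappa> ^ Suc n = \<kappa> powr (- real (Suc n))"
    using assms by (simp add: powr_minus_divide powr_realpow del: of_nat_Suc)
  finally show ?thesis .
qed

lemma nn_integral_erlang_density_greaterThan:
  fixes c l :: real
  assumes "0 \<le> c" "0 < l"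
  shows "(\<integral>\<^sup>+x. ennreal (erlang_density k l x) * indicator {c<..} x \<partial>lborel)
       = ennreal (\<Sum>p\<le>k. (l * c) ^ p * exp (- (l * c)) / fact p)"
proof -
  let ?S = "\<Sum>p\<le>k. (l * c) ^ p * exp (- (l * c)) / fact p"
  let ?T = "\<integral>\<^sup>+x. ennreal (erlang_density k l x) * indicator {c<..} x \<partial>lborel"
  have "ennreal (erlang_CDF k l c) + ?T
      = (\<integral>\<^sup>+x. ennreal (erlang_density k l x) * indicator {..c} x \<partial>lborel) + ?T"
    using assms by (simp add: nn_integral_erlang_density)
  also have "\<dots> = (\<integral>\<^sup>+x. ennreal (erlang_density k l x) \<partial>lborel)"
    by (subst nn_integral_add[symmetric]) (auto intro!: nn_integral_cong split: split_indicator)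
  also have "\<dots> = 1"
    using nn_integral_erlang_ith_moment[OF \<open>0 < l\<close>, of k 0] by simp
  finally have "ennreal (1 - ?S) + ?T = 1"
    using assms by (simp add: erlang_CDF_def)
  moreover have "0 \<le> ?S" "?S \<le> 1"
    using assms erlang_CDF_nonneg[OF \<open>0 < l\<close>, of k c] by (auto simp: erlang_CDF_def intro!: sum_nonneg)
  ultimately have "ennreal (1 - ?S) + ?T = ennreal (1 - ?S) + ennreal ?S"
    by (simp flip: ennreal_plus)
  then show ?thesis
    by (simp add: ennreal_add_left_cancel)
qed

lemma nakagami_pow_density_eq_erlang_density:
  "AE x in lborel. nakagami_pow_density (Suc k) x = erlang_density k (Suc k) x"
  using AE_lborel_singleton[of 0]
  by eventually_elim
    (simp add: nakagami_pow_density_def erlang_density_def Gamma_fact[of k, simplified add.commute])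

lemma emeasure_indep_distributed_greater:
  fixes X Y :: "'w \<Rightarrow> real" and \<phi> :: "real \<Rightarrow> real"
  assumes "prob_space M"
    and X: "distributed M lborel X f" and Y: "distributed M lborel Y g"
    and indep: "prob_space.indep_var M borel X borel Y"
    and [measurable]: "\<phi> \<in> borel_measurable borel"
  shows "emeasure M {\<omega>\<in>space M. \<phi> (Y \<omega>) < X \<omega> \<and> c < Y \<omega>}
       = (\<integral>\<^sup>+y. g y * (\<integral>\<^sup>+x. f x * indicator {\<phi> y<..} x \<partial>lborel) * indicator {c<..} y \<partial>lborel)"
proof -
  interpret prob_space M by fact
  note [measurable] = distributed_borel_measurable[OF X] distributed_borel_measurable[OF Y]
  define S where "S = {z \<in> space (lborel \<Otimes>\<^sub>M lborel). \<phi> (snd z) < fst z \<and> c < snd z}"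
  have S_sets[measurable]: "S \<in> sets (lborel \<Otimes>\<^sub>M lborel)"
    unfolding S_def by measurable
  have "indep_var lborel X lborel Y"
    using indep by (simp add: indep_var_eq measurable_lborel2)
  then have joint: "distributed M (lborel \<Otimes>\<^sub>M lborel) (\<lambda>\<omega>. (X \<omega>, Y \<omega>)) (\<lambda>(x, y). f x * g y)"
    by (rule distributed_joint_indep[OF sigma_finite_lborel sigma_finite_lborel X Y])
  have "{\<omega>\<in>space M. \<phi> (Y \<omega>) < X \<omega> \<and> c < Y \<omega>} = (\<lambda>\<omega>. (X \<omega>, Y \<omega>)) -` S \<inter> space M"
    by (auto simp: S_def space_pair_measure)
  then have "emeasure M {\<omega>\<in>space M. \<phi> (Y \<omega>) < X \<omega> \<and> c < Y \<omega>}
      = (\<integral>\<^sup>+z. (case z of (x, y) \<Rightarrow> f x * g y) * indicator S z \<partial>(lborel \<Otimes>\<^sub>M lborel))"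
    using distributed_emeasure[OF joint S_sets] by simp
  also have "\<dots> = (\<integral>\<^sup>+y. (\<integral>\<^sup>+x. f x * g y * indicator S (x, y) \<partial>lborel) \<partial>lborel)"
    by (subst lborel_pair.nn_integral_snd[symmetric]) simp_all
  also have "\<dots> = (\<integral>\<^sup>+y. g y * (\<integral>\<^sup>+x. f x * indicator {\<phi> y<..} x \<partial>lborel) * indicator {c<..} y \<partial>lborel)"
  proof (intro nn_integral_cong)
    fix y
    have "(\<integral>\<^sup>+x. f x * g y * indicator S (x, y) \<partial>lborel)
        = (\<integral>\<^sup>+x. (g y * indicator {c<..} y) * (f x * indicator {\<phi> y<..} x) \<partial>lborel)"
      by (intro nn_integral_cong) (auto simp: S_def space_pair_measure mult.commute split: split_indicator)
    also have "\<dots> = g y * indicator {c<..} y * (\<integral>\<^sup>+x. f x * indicator {\<phi> y<..} x \<partial>lborel)"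
      by (rule nn_integral_cmult) measurable
    finally show "(\<integral>\<^sup>+x. f x * g y * indicator S (x, y) \<partial>lborel)
        = g y * (\<integral>\<^sup>+x. f x * indicator {\<phi> y<..} x \<partial>lborel) * indicator {c<..} y"
      by (simp add: mult_ac)
  qed
  finally show ?thesis .
qed

lemma erlang_density_mult_poisson_sum_expand:
  fixes y t b A l :: real
  assumes "0 \<le> y"
  shows "erlang_density k l y * (\<Sum>p\<le>k. (l * (t * (b * y + A))) ^ p * exp (- (l * (t * (b * y + A)))) / fact p)
       = (\<Sum>p\<le>k. \<Sum>r\<le>p. l ^ Suc k / fact k * real (p choose r) * A ^ (p - r) * b ^ r / fact p
                            * (l * t) ^ p * exp (- (l * t * A)) * (y ^ (k + r) * exp (- (l * (t * b + 1)) * y)))"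
proof -
  have density: "erlang_density k l y = l ^ Suc k * y ^ k * exp (- l * y) / fact k"
    using assms by (simp add: erlang_density_def)
  have exp_split: "exp (- (l * (t * (b * y + A)))) = exp (- (l * t * A)) * exp (- (l * t * b * y))"
      "exp (- (l * (t * b + 1)) * y) = exp (- l * y) * exp (- (l * t * b * y))"
    by (simp_all flip: exp_add add: algebra_simps)
  have binomial: "(l * (t * (b * y + A))) ^ p = (l * t) ^ p * (\<Sum>r\<le>p. real (p choose r) * (b * y) ^ r * A ^ (p - r))" for p
    by (simp add: power_mult_distrib binomial_ring)
  show ?thesis
    unfolding density exp_split binomial sum_distrib_left sum_distrib_right sum_divide_distrib
    by (intro sum.cong refl) (simp add: power_add power_mult_distrib field_simps)
qed

lemma ennreal_sum_sum_mult:
  fixes f :: "'a \<Rightarrow> 'b \<Rightarrow> real" and g :: "'b \<Rightarrow> real"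
  assumes "\<And>p r. 0 \<le> f p r" "\<And>r. 0 \<le> g r"
  shows "ennreal (\<Sum>p\<in>P. \<Sum>r\<in>R p. f p r * g r) = (\<Sum>p\<in>P. \<Sum>r\<in>R p. ennreal (f p r) * ennreal (g r))"
  using assms by (simp add: ennreal_mult[symmetric] sum_nonneg)

lemma nn_integral_sum_power_exp_greaterThan:
  fixes c :: "'a \<Rightarrow> 'b \<Rightarrow> real" and n :: "'b \<Rightarrow> nat" and \<kappa> a :: real
  assumes "0 < \<kappa>" "0 \<le> a" "\<And>p r. 0 \<le> c p r"
  shows "(\<integral>\<^sup>+y. (\<Sum>p\<in>P. \<Sum>r\<in>R p. ennreal (c p r) * (ennreal (y ^ n r * exp (- \<kappa> * y)) * indicator {a<..} y)) \<partial>lborel)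
       = ennreal (\<Sum>p\<in>P. \<Sum>r\<in>R p. c p r
                    * (\<kappa> powr (- real (Suc (n r))) * upper_Gamma (real (Suc (n r))) (\<kappa> * a)))"
proof -
  have "(\<integral>\<^sup>+y. (\<Sum>p\<in>P. \<Sum>r\<in>R p. ennreal (c p r) * (ennreal (y ^ n r * exp (- \<kappa> * y)) * indicator {a<..} y)) \<partial>lborel)
      = (\<Sum>p\<in>P. \<Sum>r\<in>R p. ennreal (c p r) * (\<integral>\<^sup>+y. ennreal (y ^ n r * exp (- \<kappa> * y)) * indicator {a<..} y \<partial>lborel))"
    by (simp add: nn_integral_sum nn_integral_cmult)
  also have "\<dots> = (\<Sum>p\<in>P. \<Sum>r\<in>R p. ennreal (c p r)
                  * ennreal (\<kappa> powr (- real (Suc (n r))) * upper_Gamma (real (Suc (n r))) (\<kappa> * a)))"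
    unfolding nn_integral_power_exp_scaled_greaterThan[OF assms(1,2)] ..
  also have "\<dots> = ennreal (\<Sum>p\<in>P. \<Sum>r\<in>R p. c p r
                  * (\<kappa> powr (- real (Suc (n r))) * upper_Gamma (real (Suc (n r))) (\<kappa> * a)))"
    using assms(3) upper_Gamma_nonneg by (intro ennreal_sum_sum_mult[symmetric]) simp_all
  finally show ?thesis .
qed

lemma measure_indep_erlang_event:
  fixes X Y :: "'w \<Rightarrow> real" and l t b A \<theta> :: real
  assumes "prob_space M" "0 < l"
    and X: "distributed M lborel X (\<lambda>x. ennreal (erlang_density k l x))"
    and Y: "distributed M lborel Y (\<lambda>x. ennreal (erlang_density k l x))"
    and indep: "prob_space.indep_var M borel X borel Y"
    and "0 \<le> t" "0 \<le> b" "0 \<le> A" "0 \<le> \<theta>"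
  defines "\<kappa> \<equiv> l * (t * b + 1)"
  shows "measure M {\<omega>\<in>space M. t * (b * Y \<omega> + A) < X \<omega> \<and> \<theta> < Y \<omega>}
       = (\<Sum>p\<le>k. \<Sum>r\<le>p. l ^ Suc k / fact k * real (p choose r) * A ^ (p - r) * b ^ r / fact p
                            * (l * t) ^ p * exp (- (l * t * A))
                            * (\<kappa> powr (- real (Suc (k + r))) * upper_Gamma (real (Suc (k + r))) (\<kappa> * \<theta>)))"
proof -
  define c where "c p r = l ^ Suc k / fact k * real (p choose r) * A ^ (p - r) * b ^ r / fact p
                            * (l * t) ^ p * exp (- (l * t * A))" for p r
  have c_nonneg: "0 \<le> c p r" for p r
    using assms by (simp add: c_def)
  have "\<kappa> > 0"
    using assms by (simp add: \<kappa>_def add_nonneg_pos)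
  have "emeasure M {\<omega>\<in>space M. t * (b * Y \<omega> + A) < X \<omega> \<and> \<theta> < Y \<omega>}
      = (\<integral>\<^sup>+y. ennreal (erlang_density k l y)
                * (\<integral>\<^sup>+x. ennreal (erlang_density k l x) * indicator {t * (b * y + A)<..} x \<partial>lborel)
                * indicator {\<theta><..} y \<partial>lborel)"
    by (rule emeasure_indep_distributed_greater[OF assms(1) X Y indep]) simp
  also have "\<dots> = (\<integral>\<^sup>+y. (\<Sum>p\<le>k. \<Sum>r\<le>p. ennreal (c p r)
                          * (ennreal (y ^ (k + r) * exp (- \<kappa> * y)) * indicator {\<theta><..} y)) \<partial>lborel)"
  proof (intro nn_integral_cong)
    fix y
    show "ennreal (erlang_density k l y)
            * (\<integral>\<^sup>+x. ennreal (erlang_density k l x) * indicator {t * (b * y + A)<..} x \<partial>lborel)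
            * indicator {\<theta><..} y
        = (\<Sum>p\<le>k. \<Sum>r\<le>p. ennreal (c p r) * (ennreal (y ^ (k + r) * exp (- \<kappa> * y)) * indicator {\<theta><..} y))"
    proof (cases "\<theta> < y")
      case True
      then have "0 \<le> y" "0 \<le> t * (b * y + A)"
        using assms by simp_all
      let ?poisson = "\<Sum>p\<le>k. (l * (t * (b * y + A))) ^ p * exp (- (l * (t * (b * y + A)))) / fact p"
      have "ennreal (erlang_density k l y)
              * (\<integral>\<^sup>+x. ennreal (erlang_density k l x) * indicator {t * (b * y + A)<..} x \<partial>lborel)
          = ennreal (erlang_density k l y * ?poisson)"
        using assms \<open>0 \<le> t * (b * y + A)\<close>
        by (simp add: nn_integral_erlang_density_greaterThan ennreal_mult'[symmetric])
      also have "erlang_density k l y * ?poisson = (\<Sum>p\<le>k. \<Sum>r\<le>p. c p r * (y ^ (k + r) * exp (- \<kappa> * y)))"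
        using erlang_density_mult_poisson_sum_expand[OF \<open>0 \<le> y\<close>] by (simp add: c_def \<kappa>_def)
      also have "ennreal \<dots> = (\<Sum>p\<le>k. \<Sum>r\<le>p. ennreal (c p r) * ennreal (y ^ (k + r) * exp (- \<kappa> * y)))"
        using c_nonneg \<open>0 \<le> y\<close> by (intro ennreal_sum_sum_mult) simp_all
      finally show ?thesis
        using True by (simp add: sum_distrib_right mult.assoc)
    qed simp
  qed
  also have "\<dots> = ennreal (\<Sum>p\<le>k. \<Sum>r\<le>p. c p r
                  * (\<kappa> powr (- real (Suc (k + r))) * upper_Gamma (real (Suc (k + r))) (\<kappa> * \<theta>)))"
    using \<open>\<kappa> > 0\<close> \<open>0 \<le> \<theta>\<close> c_nonneg by (rule nn_integral_sum_power_exp_greaterThan[where n = "\<lambda>r. k + r"])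
  finally have "measure M {\<omega>\<in>space M. t * (b * Y \<omega> + A) < X \<omega> \<and> \<theta> < Y \<omega>}
      = (\<Sum>p\<le>k. \<Sum>r\<le>p. c p r
            * (\<kappa> powr (- real (Suc (k + r))) * upper_Gamma (real (Suc (k + r))) (\<kappa> * \<theta>)))"
    using c_nonneg upper_Gamma_nonneg by (simp add: measure_def sum_nonneg)
  then show ?thesis
    unfolding c_def .
qed

lemma measure_indep_nakagami_event:
  fixes X Y :: "'w \<Rightarrow> real" and t b A \<theta> :: real
  assumes "prob_space M" "0 < m"
    and X: "distributed M lborel X (\<lambda>x. ennreal (nakagami_pow_density m x))"
    and Y: "distributed M lborel Y (\<lambda>x. ennreal (nakagami_pow_density m x))"
    and indep: "prob_space.indep_var M borel X borel Y"
    and "0 \<le> t" "0 \<le> b" "0 \<le> A" "0 \<le> \<theta>"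
  defines "K \<equiv> t * b + 1"
  shows "measure M {\<omega>\<in>space M. t * (b * Y \<omega> + A) < X \<omega> \<and> \<theta> < Y \<omega>}
       = (\<Sum>p<m. \<Sum>r\<le>p. real (p choose r) * A ^ (p - r) * b ^ r / (Gamma (real m) * real m ^ r * fact p)
                            * (real m * t) ^ p * exp (- (real m * t * A))
                            * K powr (- real (r + m)) * upper_Gamma (real (r + m)) (\<theta> * real m * K))"
proof -
  obtain k where m: "m = Suc k"
    using \<open>0 < m\<close> by (cases m) auto
  have "K > 0"
    using assms by (simp add: K_def add_nonneg_pos)
  have "distributed M lborel Z (\<lambda>x. ennreal (erlang_density k (real m) x))"
    if "distributed M lborel Z (\<lambda>x. ennreal (nakagami_pow_density m x))" for Z :: "'w \<Rightarrow> real"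
    using that nakagami_pow_density_eq_erlang_density[of k]
    by (subst distributed_cong_density[symmetric]) (auto simp: m nakagami_pow_density_def[abs_def])
  then have "measure M {\<omega>\<in>space M. t * (b * Y \<omega> + A) < X \<omega> \<and> \<theta> < Y \<omega>}
      = (\<Sum>p\<le>k. \<Sum>r\<le>p. real m ^ Suc k / fact k * real (p choose r) * A ^ (p - r) * b ^ r / fact p
                          * (real m * t) ^ p * exp (- (real m * t * A))
                          * ((real m * K) powr (- real (Suc (k + r)))
                             * upper_Gamma (real (Suc (k + r))) (real m * K * \<theta>)))"
    using assms unfolding K_def by (intro measure_indep_erlang_event) (auto simp: m)
  also have "\<dots> = (\<Sum>p<m. \<Sum>r\<le>p. real (p choose r) * A ^ (p - r) * b ^ r / (Gamma (real m) * real m ^ r * fact p)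
                            * (real m * t) ^ p * exp (- (real m * t * A))
                            * K powr (- real (r + m)) * upper_Gamma (real (r + m)) (\<theta> * real m * K))"
  proof (intro sum.cong refl)
    show "{..k} = {..<m}"
      by (auto simp: m)
  next
    fix p r
    have "Gamma (real m) = fact k"
      using Gamma_fact[of k] by (simp add: m add.commute)
    moreover have "(real m * K) powr (- real (Suc (k + r))) = K powr (- real (r + m)) / (real m ^ r * real m ^ Suc k)"
      using \<open>K > 0\<close> \<open>0 < m\<close>
      by (simp add: m powr_mult powr_minus_divide powr_realpow power_add field_simps del: of_nat_Suc)
    moreover have "real (Suc (k + r)) = real (r + m)" "real m * K * \<theta> = \<theta> * real m * K"
      by (simp_all add: m)
    ultimately show "real m ^ Suc k / fact k * real (p choose r) * A ^ (p - r) * b ^ r / fact p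
                        * (real m * t) ^ p * exp (- (real m * t * A))
                        * ((real m * K) powr (- real (Suc (k + r)))
                           * upper_Gamma (real (Suc (k + r))) (real m * K * \<theta>))
        = real (p choose r) * A ^ (p - r) * b ^ r / (Gamma (real m) * real m ^ r * fact p)
                        * (real m * t) ^ p * exp (- (real m * t * A))
                        * K powr (- real (r + m)) * upper_Gamma (real (r + m)) (\<theta> * real m * K)"
      using \<open>0 < m\<close> by (simp only:) (simp add: field_simps)
  qed
  finally show ?thesis .
qed

lemma sic_decoding_success_iff:
  fixes \<gamma> \<gamma>' Pc Pr Gc Gr N x y :: real
  assumes "0 < Pc" "0 < Pr" "0 < Gc" "0 < Gr" "0 < N" "0 \<le> \<gamma>'"
  shows "(\<gamma> < Pc * Gc * x / (Pr * Gr * y + N) \<and> \<gamma>' < Pr * Gr * y / N)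
     \<longleftrightarrow> (\<gamma> / Pc * (Gr / Gc * Pr * y + N / Gc) < x \<and> \<gamma>' * (N / Gr) / Pr < y)"
proof -
  have second: "\<gamma>' < Pr * Gr * y / N \<longleftrightarrow> \<gamma>' * (N / Gr) / Pr < y"
    using assms by (simp add: pos_less_divide_eq pos_divide_less_eq field_simps)
  have first: "\<gamma> < Pc * Gc * x / (Pr * Gr * y + N) \<longleftrightarrow> \<gamma> / Pc * (Gr / Gc * Pr * y + N / Gc) < x"
    if "0 \<le> y"
  proof -
    have "0 < Pr * Gr * y + N"
      using assms that by (simp add: add_nonneg_pos)
    then show ?thesis
      using assms by (simp add: pos_less_divide_eq pos_divide_less_eq field_simps)
  qed
  have "0 \<le> \<gamma>' * (N / Gr) / Pr"
    using assms by simp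
  then show ?thesis
    using first second by fastforce
qed

theorem theorem2:
  fixes M :: "'w measure" and X Y :: "'w \<Rightarrow> real" and m :: nat
    and Pc Pr PBS Cc Cr dc dr \<alpha>c \<alpha>r \<beta> B \<sigma>\<tau>2 \<sigma>2 \<gamma>th \<gamma>SIC :: real
  assumes "prob_space M"
    and "m > 0"
    and "distributed M lborel X (\<lambda>x. ennreal (nakagami_pow_density m x))"
    and "distributed M lborel Y (\<lambda>x. ennreal (nakagami_pow_density m x))"
    and "prob_space.indep_var M borel X borel Y"
    and "Pc > 0" "Pr > 0" "PBS > 0" "Cc > 0" "Cr > 0" "dc > 0" "dr > 0"
    and "\<alpha>c > 0" "\<alpha>r > 0" "\<beta> > 0" "B > 0" "\<sigma>\<tau>2 > 0" "\<sigma>2 > 0" "\<gamma>th > 0" "\<gamma>SIC > 0"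
  shows
   "let \<gamma>2 = (2 * pi)^2 / 12;
        I = PBS * Cr * dr powr (- \<alpha>r) * \<gamma>2 * \<beta>^2 * B^2 * \<sigma>\<tau>2;
        \<gamma>c = (\<lambda>\<omega>. Pc * Cc * dc powr (- \<alpha>c) * X \<omega> / (Pr * Cc * dr powr (- \<alpha>c) * Y \<omega> + I + \<sigma>2));
        \<gamma>r = (\<lambda>\<omega>. Pr * Cc * dr powr (- \<alpha>c) * Y \<omega> / (I + \<sigma>2));
        a1 = I / (Cc * dc powr (- \<alpha>c));
        a2 = \<sigma>2 / (Cc * dc powr (- \<alpha>c));
        a3 = dr powr (- \<alpha>c) / dc powr (- \<alpha>c);
        a4 = I / (Cc * dr powr (- \<alpha>c));
        a5 = \<sigma>2 / (Cc * dr powr (- \<alpha>c));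
        K = \<gamma>SIC * a3 * Pr / Pc + 1
    in 1 - measure M {\<omega> \<in> space M. \<gamma>c \<omega> > \<gamma>SIC \<and> \<gamma>r \<omega> > \<gamma>th}
       = 1 - (\<Sum>p<m. \<Sum>r\<le>p.
              real (p choose r) * (a1 + a2) ^ (p - r) * (a3 * Pr) ^ r
                / (Gamma (real m) * real m ^ r * fact p)
              * (real m * \<gamma>SIC / Pc) ^ p
              * exp (- (real m * \<gamma>SIC * (a1 + a2) / Pc))
              * K powr (- real (r + m))
              * upper_Gamma (real (r + m)) (\<gamma>th * real m * (a4 + a5) / Pr * K))"
proof -
  define I where "I = PBS * Cr * dr powr (- \<alpha>r) * ((2 * pi)^2 / 12) * \<beta>^2 * B^2 * \<sigma>\<tau>2"
  define u v where "u = dc powr (- \<alpha>c)" and "v = dr powr (- \<alpha>c)"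
  define a1 a2 a3 a4 a5 where "a1 = I / (Cc * u)" and "a2 = \<sigma>2 / (Cc * u)" and "a3 = v / u"
    and "a4 = I / (Cc * v)" and "a5 = \<sigma>2 / (Cc * v)"
  have "0 < u" "0 < v" "0 \<le> I"
    using assms by (simp_all add: u_def v_def I_def)
  then have nonneg: "0 \<le> a1 + a2" "0 \<le> a3" "0 \<le> a4 + a5"
    using assms by (simp_all add: a1_def a2_def a3_def a4_def a5_def)
  have "Cc * v / (Cc * u) = a3" "(I + \<sigma>2) / (Cc * u) = a1 + a2" "(I + \<sigma>2) / (Cc * v) = a4 + a5"
    using \<open>0 < Cc\<close> by (simp_all add: a1_def a2_def a3_def a4_def a5_def add_divide_distrib)
  then have event: "(\<gamma>SIC < Pc * Cc * u * x / (Pr * Cc * v * y + I + \<sigma>2) \<and> \<gamma>th < Pr * Cc * v * y / (I + \<sigma>2))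
      \<longleftrightarrow> (\<gamma>SIC / Pc * (a3 * Pr * y + (a1 + a2)) < x \<and> \<gamma>th * (a4 + a5) / Pr < y)" for x y
    using sic_decoding_success_iff[where Gc = "Cc * u" and Gr = "Cc * v" and N = "I + \<sigma>2"
        and \<gamma> = \<gamma>SIC and \<gamma>' = \<gamma>th] assms \<open>0 < u\<close> \<open>0 < v\<close> \<open>0 \<le> I\<close>
    by (simp add: add_nonneg_pos mult.assoc add.assoc)
  show ?thesis
    using measure_indep_nakagami_event[OF assms(1-5), where t = "\<gamma>SIC / Pc" and b = "a3 * Pr"
        and A = "a1 + a2" and \<theta> = "\<gamma>th * (a4 + a5) / Pr"] assms nonneg
    unfolding Let_def I_def[symmetric] u_def[symmetric] v_def[symmetric]
      a1_def[symmetric] a2_def[symmetric] a3_def[symmetric] a4_def[symmetric] a5_def[symmetric] event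
    by (simp add: ac_simps)
qed

end
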